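(* There exist $\Delta q>0$, $\mu\in\mathbb R$, $\sigma>0$ and $0\le a<b\le\infty$ such that, for $\Lambda$ distributed as $\mathcal N(\mu,\sigma^2)$ truncated to $[a,b]$, one has $e^{\epsilon_{N^T}}=\frac{\mathbb E(\Lambda)}{M'_\Lambda(-\Delta q)}<M_\Lambda(\Delta q)$.
   Context: The truncated Gaussian on $[a,b]$ has density $\frac{\phi((x-\mu)/\sigma)}{\sigma(\Phi(\frac{b-\mu}{\sigma})-\Phi(\frac{a-\mu}{\sigma}))}$ for $a\le x\le b$ and $0$ otherwise, with $\phi,\Phi$ the standard normal density and CDF. $M_\Lambda(t)=\mathbb E[e^{t\Lambda}]$ and $M'_\Lambda(t)=\mathbb E[\Lambda e^{t\Lambda}]$. *)

theory Defs
  imports "HOL-Probability.Probability"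
begin

text \<open>Standard normal CDF, extended to the extended reals (so that \<Phi>(\<infinity>) = 1).\<close>
definition std_normal_cdf :: "ereal \<Rightarrow> real" where
  "std_normal_cdf z = (LINT t|lborel. indicator {t. ereal t \<le> z} t * std_normal_density t)"

definition trunc_gauss_density :: "real \<Rightarrow> real \<Rightarrow> real \<Rightarrow> ereal \<Rightarrow> real \<Rightarrow> real" where
  "trunc_gauss_density mu sg a b x =
     (if a \<le> x \<and> ereal x \<le> b then
        std_normal_density ((x - mu) / sg) /
        (sg * (std_normal_cdf ((b - ereal mu) / ereal sg) - std_normal_cdf (ereal ((a - mu) / sg))))
      else 0)"

definition tg_expect :: "real \<Rightarrow> real \<Rightarrow> real \<Rightarrow> ereal \<Rightarrow> (real \<Rightarrow> real) \<Rightarrow> real" where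
  "tg_expect mu sg a b f = (LINT x|lborel. trunc_gauss_density mu sg a b x * f x)"

definition tg_mgf :: "real \<Rightarrow> real \<Rightarrow> real \<Rightarrow> ereal \<Rightarrow> real \<Rightarrow> real" where
  "tg_mgf mu sg a b t = tg_expect mu sg a b (\<lambda>x. exp (t * x))"

definition tg_mgf_deriv :: "real \<Rightarrow> real \<Rightarrow> real \<Rightarrow> ereal \<Rightarrow> real \<Rightarrow> real" where
  "tg_mgf_deriv mu sg a b t = tg_expect mu sg a b (\<lambda>x. x * exp (t * x))"

end

theory Submission
  imports Defs
begin

text \<open>
  Take \<Delta>q = 1 and the standard normal distribution truncated to [1, \<infinity>). Since
  x = e^x \<cdot> x e^-x, the claim E \<Lambda> / E (\<Lambda> e^-\<Lambda>) < E e^\<Lambda> is a strict Chebyshev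
  inequality E (f g) < E f \<cdot> E g for g = exp, which is increasing, and f x = x e^-x, which is
  decreasing on [1, \<infinity>). It follows by integrating (f x - f m) (g x - g m) \<le> 0, where m \<ge> 1
  is the point with g m = E g.
\<close>

lemma weighted_integral_chebyshev_strict:
  fixes M :: "'a measure" and w f g :: "'a \<Rightarrow> real"
  assumes "integrable M w" "integrable M (\<lambda>x. w x * f x)" "integrable M (\<lambda>x. w x * g x)"
    and "integrable M (\<lambda>x. w x * (f x * g x))"
    and "integral\<^sup>L M w > 0"
    and balance: "integral\<^sup>L M (\<lambda>x. w x * g x) = c * integral\<^sup>L M w"
    and opposite: "integral\<^sup>L M (\<lambda>x. w x * ((f x - d) * (g x - c))) < 0"
  shows "integral\<^sup>L M w * integral\<^sup>L M (\<lambda>x. w x * (f x * g x))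
           < integral\<^sup>L M (\<lambda>x. w x * f x) * integral\<^sup>L M (\<lambda>x. w x * g x)"
proof -
  have "(\<lambda>x. w x * ((f x - d) * (g x - c)))
          = (\<lambda>x. w x * (f x * g x) - c * (w x * f x) - d * (w x * g x) + d * c * w x)"
    by (auto simp: algebra_simps)
  then have "integral\<^sup>L M (\<lambda>x. w x * ((f x - d) * (g x - c)))
      = integral\<^sup>L M (\<lambda>x. w x * (f x * g x)) - c * integral\<^sup>L M (\<lambda>x. w x * f x)"
    using assms(1-4) balance by simp
  with opposite have "integral\<^sup>L M (\<lambda>x. w x * (f x * g x)) < c * integral\<^sup>L M (\<lambda>x. w x * f x)"
    by simp
  with \<open>integral\<^sup>L M w > 0\<close> show ?thesis
    unfolding balance by (simp add: algebra_simps)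
qed

lemma integral_lborel_pos_if_pos_on_ray:
  fixes k :: "real \<Rightarrow> real"
  assumes "integrable lborel k" "\<And>x. 0 \<le> k x" "\<And>x. x > c \<Longrightarrow> k x > 0"
  shows "integral\<^sup>L lborel k > 0"
proof (rule ccontr)
  assume "\<not> integral\<^sup>L lborel k > 0"
  moreover have "integral\<^sup>L lborel k \<ge> 0"
    using assms(2) by (simp add: Bochner_Integration.integral_nonneg)
  ultimately have "integral\<^sup>L lborel k = 0" by simp
  with assms have "AE x in lborel. k x = 0"
    using integral_nonneg_eq_0_iff_AE[of lborel k] by auto
  then have "AE x in lborel. x \<notin> {c<..c+1}"
    by eventually_elim (use assms(3) in fastforce)
  then have "emeasure lborel {c<..c+1} = 0"
    by (subst (asm) AE_iff_measurable[of "{c<..c+1}"]) auto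
  then show False by simp
qed

lemma x_exp_neg_strict_decreasing:
  fixes x y :: real
  assumes "1 \<le> y" "y < x"
  shows "x * exp (-x) < y * exp (-y)"
proof -
  have "x \<le> y * (1 + (x - y))"
    using mult_nonneg_nonneg[of "y - 1" "x - y"] assms by (simp add: algebra_simps)
  also have "\<dots> < y * exp (x - y)"
  proof -
    have "1 + (x - y) < 1 + (x - y) + (x - y)\<^sup>2 / 2" using assms by simp
    also have "\<dots> \<le> exp (x - y)" using exp_lower_Taylor_quadratic[of "x - y"] assms by simp
    finally show ?thesis using assms by simp
  qed
  finally have "x * exp (-x) < y * exp (x - y) * exp (-x)" by simp
  also have "\<dots> = y * exp (-y)" by (simp add: mult.assoc flip: exp_add)
  finally show ?thesis .
qed

lemma x_exp_neg_exp_opposite: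
  fixes x m :: real
  assumes "1 \<le> x" "1 \<le> m" "x \<noteq> m"
  shows "(x * exp (-x) - m * exp (-m)) * (exp x - exp m) < 0"
  using assms x_exp_neg_strict_decreasing[of x m] x_exp_neg_strict_decreasing[of m x]
  by (cases x m rule: linorder_cases) (auto intro: mult_neg_pos mult_pos_neg)

definition std_normal_tail :: "real \<Rightarrow> real" where
  "std_normal_tail x = std_normal_density x * indicator {1..} x"

lemma std_normal_tail_nonneg: "0 \<le> std_normal_tail x"
  by (simp add: std_normal_tail_def)

lemma std_normal_tail_pos: "1 \<le> x \<Longrightarrow> 0 < std_normal_tail x"
  by (simp add: std_normal_tail_def normal_density_pos)

lemma integrable_std_normal_tail:
  assumes "integrable lborel (\<lambda>x. std_normal_density x * f x)"
  shows "integrable lborel (\<lambda>x. std_normal_tail x * f x)"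
  using integrable_real_mult_indicator[OF _ assms, of "{1..}"]
  by (simp add: std_normal_tail_def mult_ac)

lemma integrable_std_normal_exp: "integrable lborel (\<lambda>x. std_normal_density x * exp x)"
proof -
  have "std_normal_density x * exp x = exp (1/2) * normal_density 1 1 x" for x
    by (simp add: normal_density_def field_simps power2_eq_square flip: exp_add)
  then show ?thesis by simp
qed

lemma integrable_std_normal_tail_weight: "integrable lborel std_normal_tail"
  using integrable_std_normal_tail[of "\<lambda>_. 1"] by simp

lemma integrable_std_normal_tail_id: "integrable lborel (\<lambda>x. std_normal_tail x * x)"
  using integrable_std_normal_tail[OF integrable_std_normal_moment[of 1]] by simp

lemma integrable_std_normal_tail_exp: "integrable lborel (\<lambda>x. std_normal_tail x * exp x)"
  by (rule integrable_std_normal_tail[OF integrable_std_normal_exp])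

lemma integrable_std_normal_tail_x_exp_neg:
  "integrable lborel (\<lambda>x. std_normal_tail x * (x * exp (-x)))"
proof (rule Bochner_Integration.integrable_bound)
  show "integrable lborel std_normal_density" by simp
  have "\<bar>std_normal_tail x * (x * exp (-x))\<bar> \<le> std_normal_density x" for x :: real
  proof (cases "1 \<le> x")
    case True
    have "x \<le> exp x" using exp_ge_add_one_self[of x] by linarith
    with True have "\<bar>x * exp (-x)\<bar> \<le> 1" by (simp add: exp_minus field_simps)
    then show ?thesis
      by (simp add: std_normal_tail_def abs_mult mult_left_le indicator_def)
  qed (simp add: std_normal_tail_def)
  then show "AE x in lborel. norm (std_normal_tail x * (x * exp (-x))) \<le> norm (std_normal_density x)"
    by simp
qed (simp_all add: std_normal_tail_def)

lemma integral_std_normal_tail_pos: "integral\<^sup>L lborel std_normal_tail > 0"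
  by (rule integral_lborel_pos_if_pos_on_ray[OF integrable_std_normal_tail_weight, of 1])
     (simp_all add: std_normal_tail_nonneg std_normal_tail_pos)

lemma std_normal_tail_balance_point:
  "\<exists>m\<ge>1. (LINT x|lborel. std_normal_tail x * exp x) = exp m * integral\<^sup>L lborel std_normal_tail"
proof -
  let ?W = "integral\<^sup>L lborel std_normal_tail"
  let ?E = "LINT x|lborel. std_normal_tail x * exp x"
  have "?W > 0" by (rule integral_std_normal_tail_pos)
  have "exp 1 * ?W = (LINT x|lborel. exp 1 * std_normal_tail x)" by simp
  also have "\<dots> \<le> ?E"
  proof (rule integral_mono)
    show "exp 1 * std_normal_tail x \<le> std_normal_tail x * exp x" for x
      using mult_left_mono[of "exp 1" "exp x" "std_normal_density x"]
      by (cases "1 \<le> x") (simp_all add: std_normal_tail_def mult.commute)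
  qed (simp_all add: integrable_std_normal_tail_weight integrable_std_normal_tail_exp)
  finally have "exp 1 \<le> ?E / ?W" using \<open>?W > 0\<close> by (simp add: field_simps)
  then have "exp 1 \<le> exp (ln (?E / ?W))" and "exp (ln (?E / ?W)) * ?W = ?E"
    using \<open>?W > 0\<close> order.strict_trans2[OF exp_gt_zero] by simp_all
  then show ?thesis by (intro exI[of _ "ln (?E / ?W)"]) simp
qed

lemma std_normal_tail_opposite_integral_neg:
  assumes "1 \<le> m"
  shows "(LINT x|lborel. std_normal_tail x * ((x * exp (-x) - m * exp (-m)) * (exp x - exp m))) < 0"
proof -
  let ?k = "\<lambda>x. std_normal_tail x * ((x * exp (-x) - m * exp (-m)) * (exp x - exp m))"
  have "?k x = std_normal_tail x * x
      - exp m * (std_normal_tail x * (x * exp (-x))) - m * exp (-m) * (std_normal_tail x * exp x)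
      + m * std_normal_tail x" for x
    by (simp add: algebra_simps mult.assoc flip: exp_add)
  then have "integrable lborel (\<lambda>x. - ?k x)"
    by (simp add: integrable_std_normal_tail_weight integrable_std_normal_tail_id
        integrable_std_normal_tail_exp integrable_std_normal_tail_x_exp_neg)
  then have "integral\<^sup>L lborel (\<lambda>x. - ?k x) > 0"
  proof (rule integral_lborel_pos_if_pos_on_ray[of _ m])
    show "0 \<le> - ?k x" for x
    proof (cases "1 \<le> x \<and> x \<noteq> m")
      case True
      then show ?thesis
        using x_exp_neg_exp_opposite[OF _ assms, of x] std_normal_tail_nonneg[of x]
        by (simp add: mult_nonneg_nonpos)
    qed (auto simp: std_normal_tail_def)
    show "0 < - ?k x" if "m < x" for x
      using x_exp_neg_exp_opposite[OF _ assms, of x] std_normal_tail_pos[of x] that assms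
      by (simp add: mult_pos_neg)
  qed
  then show ?thesis by simp
qed

lemma std_normal_tail_chebyshev:
  "integral\<^sup>L lborel std_normal_tail * (LINT x|lborel. std_normal_tail x * x)
     < (LINT x|lborel. std_normal_tail x * (x * exp (-x))) * (LINT x|lborel. std_normal_tail x * exp x)"
proof -
  obtain m where "1 \<le> m"
    and balance: "(LINT x|lborel. std_normal_tail x * exp x) = exp m * integral\<^sup>L lborel std_normal_tail"
    using std_normal_tail_balance_point by blast
  have product: "(\<lambda>x. std_normal_tail x * (x * exp (-x) * exp x)) = (\<lambda>x. std_normal_tail x * x)"
    by (simp add: mult.assoc flip: exp_add)
  have "integrable lborel (\<lambda>x. std_normal_tail x * (x * exp (-x) * exp x))"
    unfolding product by (rule integrable_std_normal_tail_id)
  from weighted_integral_chebyshev_strict[OF integrable_std_normal_tail_weight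
      integrable_std_normal_tail_x_exp_neg integrable_std_normal_tail_exp this
      integral_std_normal_tail_pos balance std_normal_tail_opposite_integral_neg[OF \<open>1 \<le> m\<close>]]
  show ?thesis by (simp only: product)
qed

lemma std_normal_cdf_infinity: "std_normal_cdf \<infinity> = 1"
  by (simp add: std_normal_cdf_def)

lemma one_minus_std_normal_cdf:
  "1 - std_normal_cdf (ereal c) = (LINT x|lborel. std_normal_density x * indicator {c..} x)"
proof -
  have int_le: "integrable lborel (\<lambda>x. std_normal_density x * indicator {..c} x)"
    by (rule integrable_real_mult_indicator) auto
  have "std_normal_cdf (ereal c) = (LINT x|lborel. std_normal_density x * indicator {..c} x)"
    unfolding std_normal_cdf_def
    by (rule Bochner_Integration.integral_cong) (auto simp: indicator_def)
  then have "1 - std_normal_cdf (ereal c)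
      = (LINT x|lborel. std_normal_density x - std_normal_density x * indicator {..c} x)"
    using int_le by simp
  also have "\<dots> = (LINT x|lborel. std_normal_density x * indicator {c..} x)"
    by (rule integral_cong_AE)
       (use AE_lborel_singleton[of c] in \<open>auto elim!: eventually_mono simp: indicator_def\<close>)
  finally show ?thesis .
qed

lemma tg_expect_std_normal_tail:
  "tg_expect 0 1 1 \<infinity> f
     = (LINT x|lborel. std_normal_tail x * f x) / integral\<^sup>L lborel std_normal_tail"
proof -
  have "std_normal_cdf \<infinity> - std_normal_cdf (ereal 1) = integral\<^sup>L lborel std_normal_tail"
    using one_minus_std_normal_cdf[of 1] by (simp add: std_normal_cdf_infinity std_normal_tail_def[abs_def])
  then have "trunc_gauss_density 0 1 1 \<infinity> x * f x
      = std_normal_tail x * f x / integral\<^sup>L lborel std_normal_tail" for x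
    by (simp add: trunc_gauss_density_def std_normal_tail_def indicator_def)
  then show ?thesis
    by (simp add: tg_expect_def)
qed

theorem mainTheorem14:
  shows "\<exists>dq mu sg (a::real) (b::ereal).
           dq > 0 \<and> sg > 0 \<and> 0 \<le> a \<and> ereal a < b \<and>
           tg_expect mu sg a b (\<lambda>x. x) / tg_mgf_deriv mu sg a b (- dq)
             < tg_mgf mu sg a b dq"
proof -
  have "(LINT x|lborel. std_normal_tail x * (x * exp (-x))) > 0"
    by (rule integral_lborel_pos_if_pos_on_ray[OF integrable_std_normal_tail_x_exp_neg, of 1])
       (auto simp: std_normal_tail_def indicator_def normal_density_pos)
  then have "tg_expect 0 1 1 \<infinity> (\<lambda>x. x) / tg_mgf_deriv 0 1 1 \<infinity> (- 1) < tg_mgf 0 1 1 \<infinity> 1"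
    using std_normal_tail_chebyshev integral_std_normal_tail_pos
    by (simp add: tg_mgf_def tg_mgf_deriv_def tg_expect_std_normal_tail field_simps)
  then show ?thesis
    by (intro exI[of _ 1] exI[of _ 0] exI[of _ 1] exI[of _ 1] exI[of _ \<infinity>]) simp
qed

end
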